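(* Let $n\ge 1$, let $k$ be an even positive divisor of $n$, and let $A$ be a subgroup of $(\mathbb{Z}/n\mathbb{Z})^\times$ such that $$A=\{jn/k+1 \bmod n : j\in J_+\}\cup\{jn/k-1 \bmod n: j\in J_-\}$$ for subsets $J_+,J_-\subseteq\{0,1,\dots,k-1\}$ with $J_-=\{k/2-j \bmod k : j\in J_+\}$. Let $r\in\mathbb{Z}/n\mathbb{Z}$ (represented by an integer) and $X=Ar$. (i) If $r$ is even, then $\sigma_X(y)\in\mathbb{R}$ for all $y\in\mathbb{Z}/n\mathbb{Z}$. (ii) If $r$ is odd, then $\sigma_X(y)$ is real whenever $y$ is even and purely imaginary whenever $y$ is odd (parity of $y$ being well defined since $n$ is even).
   Context: Write $e(\theta)=\exp(2\pi i\theta)$. For a subgroup $A$ of $(\mathbb{Z}/n\mathbb{Z})^\times$ and $r\in\mathbb{Z}/n\mathbb{Z}$, let $X=Ar=\{ar:a\in A\}$ and $\sigma_X(y)=\sum_{x\in X}e\left(\frac{xy}{n}\right)$ for $y\in\mathbb{Z}/n\mathbb{Z}$. *)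

theory Defs
  imports Complex_Main
begin

text \<open>Residues modulo n are represented by integers in {0..<n}.\<close>

definition ee :: "real \<Rightarrow> complex" where
  "ee \<theta> = exp (2 * of_real pi * \<i> * of_real \<theta>)"

definition units_mod :: "int \<Rightarrow> int set" where
  "units_mod n = {a. 0 \<le> a \<and> a < n \<and> coprime a n}"

definition unit_subgroup :: "int \<Rightarrow> int set \<Rightarrow> bool" where
  "unit_subgroup n A \<longleftrightarrow> A \<subseteq> units_mod n \<and> 1 mod n \<in> A
     \<and> (\<forall>a\<in>A. \<forall>b\<in>A. (a * b) mod n \<in> A)
     \<and> (\<forall>a\<in>A. \<exists>b\<in>A. (a * b) mod n = 1 mod n)"

definition orbit_set :: "int \<Rightarrow> int set \<Rightarrow> int \<Rightarrow> int set" where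
  "orbit_set n A r = (\<lambda>a. (a * r) mod n) ` A"

definition sigma :: "int \<Rightarrow> int set \<Rightarrow> int \<Rightarrow> complex" where
  "sigma n X y = (\<Sum>x\<in>X. ee (real_of_int (x * y) / real_of_int n))"

end

theory Submission
  imports Defs
begin

text \<open>The hypothesis on \<open>J\<^sub>+, J\<^sub>-\<close> says exactly that \<open>A\<close> is stable under \<open>a \<mapsto> n/2 - a\<close>.
  Hence \<open>X = A r\<close> is stable under the involution \<open>x \<mapsto> (n/2) r - x\<close>, and reindexing the sum
  along it gives \<open>\<sigma>\<^sub>X(y) = e(r y / 2) \<cdot> conj \<sigma>\<^sub>X(y)\<close>. The factor \<open>e(r y/2)\<close> is \<open>1\<close> when
  \<open>r y\<close> is even, making \<open>\<sigma>\<^sub>X(y)\<close> real, and \<open>-1\<close> when \<open>r y\<close> is odd, making it imaginary.\<close>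

lemma ee_eq_cis: "ee t = cis (2 * pi * t)"
  by (simp add: ee_def cis_conv_exp mult_ac)

lemma ee_add: "ee (a + b) = ee a * ee b"
  by (simp add: ee_eq_cis cis_mult distrib_left)

lemma ee_of_int: "ee (of_int z) = 1"
  by (simp add: ee_eq_cis)

lemma cnj_ee: "cnj (ee t) = ee (- t)"
  by (simp add: ee_eq_cis cis_cnj)

lemma ee_half_even: "even (z::int) \<Longrightarrow> ee (of_int z / 2) = 1"
  by (auto simp: ee_of_int)

lemma ee_half_odd:
  assumes "odd (z::int)"
  shows "ee (of_int z / 2) = -1"
proof -
  obtain q where "z = 2 * q + 1" using assms by (metis oddE)
  then have "ee (of_int z / 2) = ee (of_int q) * ee (1 / 2)"
    by (simp add: ee_add[symmetric] add_divide_distrib)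
  then show ?thesis by (simp add: ee_of_int ee_eq_cis)
qed

lemma sigma_eq_ee_mult_cnj_sigma:
  fixes n c :: int and X :: "int set"
  assumes "n \<noteq> 0"
    and residues: "\<And>x. x \<in> X \<Longrightarrow> x mod n = x"
    and reflect: "\<And>x. x \<in> X \<Longrightarrow> (c - x) mod n \<in> X"
  shows "sigma n X y = ee (of_int (c * y) / of_int n) * cnj (sigma n X y)"
proof -
  define \<psi> where "\<psi> x = (c - x) mod n" for x
  have "sigma n X y = (\<Sum>x\<in>X. ee (of_int (\<psi> x * y) / of_int n))"
    unfolding sigma_def
    by (rule sum.reindex_bij_witness[where i = \<psi> and j = \<psi>])
       (auto simp: \<psi>_def reflect residues mod_diff_right_eq)
  also have "\<dots> = (\<Sum>x\<in>X. ee (of_int (c * y) / of_int n) * ee (- (of_int (x * y) / of_int n)))"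
  proof (rule sum.cong[OF refl])
    fix x
    define q where "q = (c - x) div n"
    have c_eq: "c = \<psi> x + x + n * q"
      by (simp add: \<psi>_def q_def minus_div_mult_eq_mod[symmetric] mult.commute)
    have "real_of_int (\<psi> x * y) / of_int n
        = (of_int (c * y) / of_int n + - (of_int (x * y) / of_int n)) + of_int (- (q * y))"
      using assms(1) by (simp add: c_eq field_simps)
    then show "ee (of_int (\<psi> x * y) / of_int n)
        = ee (of_int (c * y) / of_int n) * ee (- (of_int (x * y) / of_int n))"
      by (simp only: ee_add ee_of_int mult_1_right)
  qed
  also have "\<dots> = ee (of_int (c * y) / of_int n) * cnj (sigma n X y)"
    by (simp add: sigma_def sum_distrib_left cnj_ee)
  finally show ?thesis .
qed

lemma mod_reflect_shift:
  fixes n k m h j j' e :: int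
  assumes "n = k * m" and "(h - j) mod k = j' mod k"
  shows "(j' * m + e) mod n = (h * m - (j * m - e)) mod n"
proof -
  obtain t where t: "(h - j) - j' = k * t"
    using assms(2) by (auto simp: mod_eq_dvd_iff dvd_def)
  have "j' * m + e - (h * m - (j * m - e)) = - (((h - j) - j') * m)"
    by (simp add: algebra_simps)
  also have "\<dots> = n * (- t)"
    by (simp add: t assms(1) mult_ac)
  finally show ?thesis by (simp add: mod_eq_dvd_iff)
qed

lemma reflection_mem_A:
  fixes n k m h :: int and A Jp Jm :: "int set"
  assumes "n = k * m"
    and Jm: "Jm = {(h - j) mod k | j. j \<in> Jp}"
    and A: "A = {(j * m + 1) mod n | j. j \<in> Jp} \<union> {(j * m - 1) mod n | j. j \<in> Jm}"
    and "a \<in> A"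
  shows "(h * m - a) mod n \<in> A"
  using \<open>a \<in> A\<close> unfolding A
proof (elim UnE CollectE exE conjE)
  fix j assume "a = (j * m + 1) mod n" "j \<in> Jp"
  moreover have "((h - j) mod k * m - 1) mod n = (h * m - (j * m + 1)) mod n"
    using mod_reflect_shift[OF assms(1), of h j "(h - j) mod k" "-1"] by simp
  ultimately have "(h * m - a) mod n = ((h - j) mod k * m - 1) mod n \<and> (h - j) mod k \<in> Jm"
    by (auto simp: Jm mod_diff_right_eq)
  then show "(h * m - a) mod n \<in> {(j * m + 1) mod n | j. j \<in> Jp} \<union> {(j * m - 1) mod n | j. j \<in> Jm}"
    by blast
next
  fix j assume "a = (j * m - 1) mod n" "j \<in> Jm"
  then obtain i where i: "i \<in> Jp" "j = (h - i) mod k" using Jm by blast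
  have "(i * m + 1) mod n = (h * m - (j * m - 1)) mod n"
    by (rule mod_reflect_shift[OF assms(1)]) (simp add: i(2) mod_diff_right_eq)
  then have "(h * m - a) mod n = (i * m + 1) mod n"
    using \<open>a = _\<close> by (simp add: mod_diff_right_eq)
  then show "(h * m - a) mod n \<in> {(j * m + 1) mod n | j. j \<in> Jp} \<union> {(j * m - 1) mod n | j. j \<in> Jm}"
    using i(1) by blast
qed

lemma orbit_set_reflect:
  assumes "\<And>a. a \<in> A \<Longrightarrow> (c - a) mod n \<in> A" and "x \<in> orbit_set n A r"
  shows "(c * r - x) mod n \<in> orbit_set n A r"
proof -
  obtain a where "a \<in> A" "x = (a * r) mod n"
    using assms(2) unfolding orbit_set_def by blast
  then have "(c * r - x) mod n = ((c - a) mod n * r) mod n"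
    by (simp add: mod_diff_right_eq mod_mult_left_eq left_diff_distrib)
  then show ?thesis using assms(1)[OF \<open>a \<in> A\<close>] unfolding orbit_set_def by blast
qed

theorem proposition4p1:
  fixes n k r :: int and A Jp Jm :: "int set"
  assumes "n \<ge> 1" and "k > 0" and "even k" and "k dvd n"
    and "unit_subgroup n A"
    and "Jp \<subseteq> {0..<k}" and "Jm \<subseteq> {0..<k}"
    and "Jm = {(k div 2 - j) mod k | j. j \<in> Jp}"
    and "A = {(j * (n div k) + 1) mod n | j. j \<in> Jp} \<union> {(j * (n div k) - 1) mod n | j. j \<in> Jm}"
  shows "(even r \<longrightarrow> (\<forall>y. sigma n (orbit_set n A r) y \<in> \<real>))
       \<and> (odd r \<longrightarrow> (\<forall>y. (even y \<longrightarrow> sigma n (orbit_set n A r) y \<in> \<real>)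
                         \<and> (odd y \<longrightarrow> Re (sigma n (orbit_set n A r) y) = 0)))"
proof -
  define X where "X = orbit_set n A r"
  have n_eq: "n = k * (n div k)"
    using assms(4) by simp
  have half: "n div 2 = k div 2 * (n div k)"
    using assms(3) by (subst n_eq) (auto elim!: evenE)
  have "(n div 2 - a) mod n \<in> A" if "a \<in> A" for a
    unfolding half using reflection_mem_A[OF n_eq assms(8,9) that] .
  then have "(n div 2 * r - x) mod n \<in> X" if "x \<in> X" for x
    using orbit_set_reflect that unfolding X_def by blast
  moreover have "x mod n = x" if "x \<in> X" for x
    using that by (auto simp: X_def orbit_set_def)
  ultimately have "sigma n X y = ee (of_int (n div 2 * r * y) / of_int n) * cnj (sigma n X y)" for y
    using sigma_eq_ee_mult_cnj_sigma[of n X "n div 2 * r"] assms(1) by simp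
  moreover have "of_int (n div 2 * r * y) / of_int n = (of_int (r * y) / 2 :: real)" for y
  proof -
    obtain n' where "n = 2 * n'"
      using n_eq assms(3) by (metis dvd_mult2 evenE)
    then show ?thesis using assms(1) by simp
  qed
  ultimately have reflection: "sigma n X y = ee (of_int (r * y) / 2) * cnj (sigma n X y)" for y
    by metis
  have "sigma n X y \<in> \<real>" if "even (r * y)" for y
    using reflection[of y] unfolding ee_half_even[OF that] by (simp add: Reals_cnj_iff)
  moreover have "Re (sigma n X y) = 0" if "odd (r * y)" for y
    using arg_cong[OF reflection[of y], of Re] unfolding ee_half_odd[OF that] by simp
  ultimately show ?thesis unfolding X_def by auto
qed

end
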